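(* Let $\mathcal{H}$ be any directed hypergraph on $\{1,2,3\}$ and consider any network dynamical system on $\mathcal{H}$ with one-dimensional node states, smooth $F$ and smooth nodeunspecific coupling functions $G_e$ (possibly different for different hyperedges). Then the resulting vector field is not equal to the Guckenheimer--Holmes vector field $$\dot x_1 = x_1 + a x_1^3 + b x_1x_2^2 + c x_1x_3^2,\quad \dot x_2 = x_2 + a x_2^3 + b x_2x_3^2 + c x_1^2x_2,\quad \dot x_3 = x_3 + a x_3^3 + b x_1^2x_3 + c x_2^2x_3$$ for any real $a,b,c$ with $(b,c)\neq(0,0)$. In particular, it cannot be realized for parameters satisfying $a+b+c=-1$, $-\tfrac13<a<0$, $c<a<b<0$.
   Context: A directed hypergraph on $\mathcal{V}=\{1,\dots,N\}$ is a set $\mathcal{E}$ of hyperedges $e=(T(e),H(e))$ with nonempty tail $T(e)\subseteq\mathcal V$ and head $H(e)\subseteq\mathcal V$. A network dynamical system on it is $\dot x_k = F(x_k) + \sum_{e\in\mathcal{E}:\,k\in H(e)} G_e(x_k; x_{T(e)})$ on $\mathbb{R}^N$, with $F:\mathbb R\to\mathbb R$ smooth and each $G_e:\mathbb{R}\times\mathbb{R}^{|T(e)|}\to\mathbb{R}$ smooth, invariant under permutations of its last $|T(e)|$ arguments and depending nontrivially on them. The coupling is nodeunspecific if each $G_e(z;y)$ does not depend on its first argument $z$, i.e. $G_e(x_k;x_{T(e)})=G_e(x_{T(e)})$ (the receiving node may still belong to $T(e)$). *)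

theory Defs
  imports "HOL-Analysis.Analysis"
begin

fun Ck :: "nat \<Rightarrow> ('a::euclidean_space \<Rightarrow> real) \<Rightarrow> bool" where
  "Ck 0 f = continuous_on UNIV f"
| "Ck (Suc k) f = ((\<forall>x. f differentiable (at x)) \<and>
      (\<forall>i\<in>Basis. Ck k (\<lambda>x. frechet_derivative f (at x) i)))"

definition smooth :: "('a::euclidean_space \<Rightarrow> real) \<Rightarrow> bool" where
  "smooth f \<longleftrightarrow> (\<forall>k. Ck k f)"

type_synonym hedge = "3 set \<times> 3 set"

definition dir_hypergraph :: "hedge set \<Rightarrow> bool" where
  "dir_hypergraph E \<longleftrightarrow> (\<forall>e\<in>E. fst e \<noteq> {} \<and> snd e \<noteq> {})"

text \<open>Nodeunspecific admissible coupling function for hyperedge e, represented as a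
  function on R^3 depending only on the tail coordinates: smooth, symmetric under
  permutations of the tail, and depending nontrivially on the tail variables.\<close>
definition nodeunspec_coupling :: "hedge \<Rightarrow> (real^3 \<Rightarrow> real) \<Rightarrow> bool" where
  "nodeunspec_coupling e g \<longleftrightarrow>
     smooth g \<and>
     (\<forall>x y. (\<forall>i\<in>fst e. x $ i = y $ i) \<longrightarrow> g x = g y) \<and>
     (\<forall>\<sigma>. \<sigma> permutes (fst e) \<longrightarrow> (\<forall>x. g (\<chi> i. x $ \<sigma> i) = g x)) \<and>
     (\<exists>x y. g x \<noteq> g y)"

definition network_vf ::
  "(real \<Rightarrow> real) \<Rightarrow> hedge set \<Rightarrow> (hedge \<Rightarrow> real^3 \<Rightarrow> real) \<Rightarrow> real^3 \<Rightarrow> 3 \<Rightarrow> real" where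
  "network_vf F E G x k = F (x $ k) + (\<Sum>e\<in>{e\<in>E. k \<in> snd e}. G e x)"

definition GH_vf :: "real \<Rightarrow> real \<Rightarrow> real \<Rightarrow> real^3 \<Rightarrow> 3 \<Rightarrow> real" where
  "GH_vf a b c x k =
     (if k = 1 then x$1 + a * x$1^3 + b * x$1 * x$2^2 + c * x$1 * x$3^2
      else if k = 2 then x$2 + a * x$2^3 + b * x$2 * x$3^2 + c * x$1^2 * x$2
      else x$3 + a * x$3^3 + b * x$1^2 * x$3 + c * x$2^2 * x$3)"

end

theory Submission
  imports Defs
begin

text \<open>For a function g restricted to the plane of coordinates i and j, the mixed difference
  g(p,q) - g(0,q) - g(p,0) vanishes up to a constant when g ignores one of the two
  coordinates, and is symmetric in (p,q) when g is symmetric in them. So a nodeunspecific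
  coupling, and with it the whole network vector field, has a symmetric mixed difference at
  every node. For the Guckenheimer--Holmes field at node 1 the mixed difference in the
  planes (1,2) and (1,3) is b p q^2 and c p q^2, which is symmetric only if b = c = 0.\<close>

definition plane_point :: "'n \<Rightarrow> 'n \<Rightarrow> real \<Rightarrow> real \<Rightarrow> real^'n" where
  "plane_point i j p q = (\<chi> k. if k = i then p else if k = j then q else 0)"

definition mixed_diff :: "(real^'n \<Rightarrow> real) \<Rightarrow> 'n \<Rightarrow> 'n \<Rightarrow> real \<Rightarrow> real \<Rightarrow> real" where
  "mixed_diff g i j p q =
     g (plane_point i j p q) - g (plane_point i j 0 q) - g (plane_point i j p 0)"

lemma plane_point_nth_first [simp]: "plane_point i j p q $ i = p"
  by (simp add: plane_point_def)

lemma mixed_diff_sum: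
  "mixed_diff (\<lambda>x. \<Sum>e\<in>A. G e x) i j p q = (\<Sum>e\<in>A. mixed_diff (G e) i j p q)"
  by (simp add: mixed_diff_def sum_subtractf)

lemma mixed_diff_commute_if_local_symmetric:
  fixes g :: "real^'n \<Rightarrow> real"
  assumes local: "\<And>x y. (\<forall>k\<in>T. x $ k = y $ k) \<Longrightarrow> g x = g y"
    and symmetric: "\<And>\<sigma> x. \<sigma> permutes T \<Longrightarrow> g (\<chi> k. x $ \<sigma> k) = g x"
    and "i \<noteq> j"
  shows "mixed_diff g i j p q = mixed_diff g i j q p"
proof -
  consider "i \<in> T" "j \<in> T" | "i \<notin> T" | "j \<notin> T" by blast
  then show ?thesis
  proof cases
    case 1
    have swap: "g (plane_point i j p q) = g (plane_point i j q p)" for p q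
    proof -
      have "Transposition.transpose i j permutes T"
        using 1 by (simp add: permutes_swap_id)
      moreover have "(\<chi> k. plane_point i j p q $ Transposition.transpose i j k) = plane_point i j q p"
        using \<open>i \<noteq> j\<close> by (auto simp: plane_point_def vec_eq_iff transpose_def)
      ultimately show ?thesis using symmetric by metis
    qed
    show ?thesis using swap[of p q] swap[of 0 q] swap[of p 0] by (simp add: mixed_diff_def)
  next
    case 2
    then have "g (plane_point i j p q) = g (plane_point i j 0 q)" for p q
      by (auto simp: plane_point_def intro!: local)
    from this[of p q] this[of p 0] this[of q p] this[of q 0] show ?thesis
      by (simp add: mixed_diff_def)
  next
    case 3
    then have "g (plane_point i j p q) = g (plane_point i j p 0)" for p q
      using \<open>i \<noteq> j\<close> by (auto simp: plane_point_def intro!: local)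
    from this[of p q] this[of 0 q] this[of q p] this[of 0 p] show ?thesis
      by (simp add: mixed_diff_def)
  qed
qed

lemma nodeunspec_coupling_mixed_diff_commute:
  assumes "nodeunspec_coupling e g" and "i \<noteq> j"
  shows "mixed_diff g i j p q = mixed_diff g i j q p"
  using assms
  by (intro mixed_diff_commute_if_local_symmetric[of "fst e"]) (auto simp: nodeunspec_coupling_def)

lemma network_vf_mixed_diff_commute:
  assumes "\<forall>e\<in>E. nodeunspec_coupling e (G e)" and "i \<noteq> j"
  shows "mixed_diff (\<lambda>x. network_vf F E G x i) i j p q = mixed_diff (\<lambda>x. network_vf F E G x i) i j q p"
proof -
  have F_part: "mixed_diff (\<lambda>x. F (x $ i)) i j p q = - F 0" for p q
    by (simp add: mixed_diff_def)
  have "mixed_diff (\<lambda>x. network_vf F E G x i) i j p q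
      = mixed_diff (\<lambda>x. F (x $ i)) i j p q + mixed_diff (\<lambda>x. \<Sum>e\<in>{e\<in>E. i \<in> snd e}. G e x) i j p q"
    for p q by (simp add: mixed_diff_def network_vf_def)
  moreover have "(\<Sum>e\<in>{e\<in>E. i \<in> snd e}. mixed_diff (G e) i j p q)
               = (\<Sum>e\<in>{e\<in>E. i \<in> snd e}. mixed_diff (G e) i j q p)"
    using assms by (intro sum.cong refl nodeunspec_coupling_mixed_diff_commute) auto
  ultimately show ?thesis by (simp add: F_part mixed_diff_sum)
qed

lemma GH_vf_mixed_diff_12: "mixed_diff (\<lambda>x. GH_vf a b c x 1) 1 2 p q = b * p * q^2"
  by (simp add: mixed_diff_def GH_vf_def plane_point_def)

lemma GH_vf_mixed_diff_13: "mixed_diff (\<lambda>x. GH_vf a b c x 1) 1 3 p q = c * p * q^2"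
  by (simp add: mixed_diff_def GH_vf_def plane_point_def)

theorem mainTheorem3:
  fixes E :: "hedge set" and F :: "real \<Rightarrow> real" and G :: "hedge \<Rightarrow> real^3 \<Rightarrow> real"
    and a b c :: real
  assumes "dir_hypergraph E"
    and "smooth F"
    and "\<forall>e\<in>E. nodeunspec_coupling e (G e)"
    and "(b, c) \<noteq> (0, 0)"
  shows "network_vf F E G \<noteq> GH_vf a b c"
proof
  assume eq: "network_vf F E G = GH_vf a b c"
  have "mixed_diff (\<lambda>x. GH_vf a b c x 1) 1 j 1 2 = mixed_diff (\<lambda>x. GH_vf a b c x 1) 1 j 2 1"
    if "j \<noteq> 1" for j
    using network_vf_mixed_diff_commute[OF assms(3), where F = F and i = 1 and j = j] that by (simp add: eq)
  from this[of 2] this[of 3] have "b = 0" "c = 0"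
    by (simp_all add: GH_vf_mixed_diff_12 GH_vf_mixed_diff_13)
  with assms(4) show False by simp
qed

end
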